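(* Let $\mathfrak{s}$ be the probability measure on $\mathbb{R}$ whose moments are $\int x^n\,\mathfrak{s}(dx)=\frac{n^n}{n!}$, $n\ge0$. Then $\mathfrak{s}$ has a probability density function $\varphi_{\mathfrak{s}}$ supported on $[0,e]$, given in parametric form by \[ \varphi_{\mathfrak{s}}\!\left(\frac{\sin v}{v}\exp(v\cot v)\right)=\frac1\pi\,\frac{v^2\exp(-v\cot v)}{\sin v\,\big((1-v\cot v)^2+v^2\big)},\qquad 0<v<\pi . \]
   Context: The existence of a probability measure with moment sequence $\{n^n/n!\}_{n\ge0}$ is known (Młotkowski). The map $v\mapsto\frac{\sin v}{v}\exp(v\cot v)$ is a bijection of $(0,\pi)$ onto $(0,e)$. *)

theory Defs
  imports "HOL-Probability.Probability"
begin

end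

theory Submission
  imports Defs
begin

text \<open>
  Put \<open>X(v) = sin v / v \<cdot> exp (v cot v)\<close>. On the curve \<open>z = (v / sin v) e\<^sup>i\<^sup>v\<close> one has
  \<open>e\<^sup>z / z = X(v)\<close>, and integrating \<open>(e\<^sup>z / z)\<^sup>n\<close> over the circular arc of radius \<open>v / sin v\<close>
  from angle \<open>0\<close> to \<open>v\<close> gives a function \<open>Q\<^sub>n(v)\<close> with \<open>Q\<^sub>n' = X\<^sup>n\<close>. As \<open>v \<rightarrow> 0\<close> the arc
  shrinks, while as \<open>v \<rightarrow> \<pi>\<close> it tends to a half circle on which the Laurent expansion of
  \<open>(e\<^sup>z / z)\<^sup>n\<close> contributes only its constant term \<open>\<pi> n\<^sup>n / n!\<close>. Hence
  \<open>\<integral>\<^sub>0\<^sup>\<pi> X(v)\<^sup>n dv = \<pi> n\<^sup>n / n!\<close>. Since \<open>X\<close> decreases from \<open>e\<close> to \<open>0\<close>, the substitution \<open>y = X(v)\<close>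
  shows that the parametrically given \<open>\<phi>\<close> has these moments; as they grow at most like
  \<open>e\<^sup>n\<close>, they determine the distribution.
\<close>

section \<open>Determinacy of compactly supported moment problems\<close>

lemma measure_abs_ge_eq_0_of_even_moments_le:
  fixes M :: "real measure"
  assumes "real_distribution M" and "0 < B" and "B < b"
    and int: "\<And>n. integrable M (\<lambda>x. x ^ (2 * n))"
    and mom: "\<And>n. integral\<^sup>L M (\<lambda>x. x ^ (2 * n)) \<le> B ^ (2 * n)"
  shows "measure M {x \<in> space M. b \<le> \<bar>x\<bar>} = 0"
proof -
  interpret real_distribution M by fact
  have "b > 0" using assms by simp
  have Markov: "measure M {x \<in> space M. b \<le> \<bar>x\<bar>} \<le> (B / b) ^ (2 * n)" for n
  proof -
    have "b ^ (2 * n) \<le> x ^ (2 * n)" if "b \<le> \<bar>x\<bar>" for x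
      using power_mono[OF that, of "2 * n"] \<open>b > 0\<close> by (simp add: power_even_abs)
    then have "measure M {x \<in> space M. b \<le> \<bar>x\<bar>} \<le> measure M {x \<in> space M. b ^ (2 * n) \<le> x ^ (2 * n)}"
      by (intro finite_measure_mono) auto
    also have "\<dots> \<le> integral\<^sup>L M (\<lambda>x. x ^ (2 * n)) / b ^ (2 * n)"
      by (rule integral_Markov_inequality_measure[where A="space M"]) (use int \<open>b > 0\<close> in auto)
    also have "\<dots> \<le> B ^ (2 * n) / b ^ (2 * n)"
      using mom \<open>b > 0\<close> by (intro divide_right_mono) auto
    finally show ?thesis by (simp add: power_divide)
  qed
  have "(\<lambda>n. ((B / b) ^ 2) ^ n) \<longlonglongrightarrow> 0"
    using assms by (intro LIMSEQ_power_zero) (simp add: power_less_one_iff abs_less_iff)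
  then have "measure M {x \<in> space M. b \<le> \<bar>x\<bar>} \<le> 0"
    by (intro tendsto_lowerbound[of "\<lambda>n. (B / b) ^ (2 * n)"]) (use Markov in \<open>auto simp: power_mult\<close>)
  then show ?thesis using measure_nonneg[of M] by (simp add: order.antisym)
qed

lemma AE_abs_le_of_even_moments_le:
  fixes M :: "real measure"
  assumes "real_distribution M" and "B > 0"
    and "\<And>n. integrable M (\<lambda>x. x ^ (2 * n))"
    and "\<And>n. integral\<^sup>L M (\<lambda>x. x ^ (2 * n)) \<le> B ^ (2 * n)"
  shows "AE x in M. \<bar>x\<bar> \<le> B"
proof -
  interpret real_distribution M by fact
  have "AE x in M. \<bar>x\<bar> < B + 1 / real (Suc k)" for k
  proof (rule AE_I')
    let ?N = "{x \<in> space M. B + 1 / real (Suc k) \<le> \<bar>x\<bar>}"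
    have "?N \<in> sets M" by measurable
    moreover have "emeasure M ?N = 0"
      using measure_abs_ge_eq_0_of_even_moments_le[OF assms(1,2) _ assms(3,4), of "B + 1 / real (Suc k)"]
      by (simp add: emeasure_eq_measure)
    ultimately show "?N \<in> null_sets M" by auto
  qed auto
  then have "AE x in M. \<forall>k. \<bar>x\<bar> < B + 1 / real (Suc k)" by (simp add: AE_all_countable)
  then show ?thesis
  proof eventually_elim
    case (elim x)
    show "\<bar>x\<bar> \<le> B"
    proof (rule ccontr)
      assume "\<not> \<bar>x\<bar> \<le> B"
      then obtain k where "1 / real (Suc k) < \<bar>x\<bar> - B"
        using nat_approx_posE[of "\<bar>x\<bar> - B"] by auto
      with elim[rule_format, of k] show False by simp
    qed
  qed
qed

lemma iexp_eq_suminf: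
  "iexp (t * x) = (\<Sum>k. (\<i> * complex_of_real t) ^ k / fact k * complex_of_real (x ^ k))"
proof -
  have "(\<lambda>k. (\<i> * complex_of_real (t * x)) ^ k /\<^sub>R fact k) sums iexp (t * x)"
    by (rule exp_converges)
  moreover have "(\<i> * complex_of_real (t * x)) ^ k /\<^sub>R fact k
      = (\<i> * complex_of_real t) ^ k / fact k * complex_of_real (x ^ k)" for k
    by (simp add: power_mult_distrib scaleR_conv_of_real field_simps)
  ultimately show ?thesis by (simp add: sums_iff)
qed

lemma char_eq_moment_series:
  fixes M :: "real measure"
  assumes "real_distribution M"
    and bounded: "AE x in M. \<bar>x\<bar> \<le> B"
    and int: "\<And>n. integrable M (\<lambda>x. x ^ n)"
  shows "char M t = (\<Sum>k. (\<i> * complex_of_real t) ^ k / fact k * complex_of_real (integral\<^sup>L M (\<lambda>x. x ^ k)))"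
proof -
  interpret real_distribution M by fact
  define f where "f k x = (\<i> * complex_of_real t) ^ k / fact k * complex_of_real (x ^ k)" for k x
  have norm_f: "norm (f k x) = \<bar>t * x\<bar> ^ k / fact k" for k x
    unfolding f_def by (simp add: norm_mult norm_divide norm_power abs_mult power_mult_distrib)
  have int_f: "integrable M (f k)" for k
    unfolding f_def by (intro integrable_mult_right integrable_of_real int)
  have int_norm_f_le: "(\<integral>x. norm (f k x) \<partial>M) \<le> (\<bar>t\<bar> * B) ^ k / fact k" for k
  proof -
    have "(\<integral>x. norm (f k x) \<partial>M) \<le> (\<integral>x. (\<bar>t\<bar> * B) ^ k / fact k \<partial>M)"
    proof (rule integral_mono_AE)
      show "AE x in M. norm (f k x) \<le> (\<bar>t\<bar> * B) ^ k / fact k"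
        using bounded
      proof eventually_elim
        case (elim x)
        have "\<bar>t * x\<bar> ^ k \<le> (\<bar>t\<bar> * B) ^ k"
          using elim by (intro power_mono) (auto simp: abs_mult intro: mult_left_mono)
        then show ?case unfolding norm_f by (intro divide_right_mono) auto
      qed
    qed (use int_f in auto)
    then show ?thesis using prob_space space_eq_univ by simp
  qed
  have "summable (\<lambda>k. \<integral>x. norm (f k x) \<partial>M)"
  proof (rule summable_comparison_test'[OF summable_exp[of "\<bar>t\<bar> * B"]])
    show "norm (\<integral>x. norm (f n x) \<partial>M) \<le> inverse (fact n) * (\<bar>t\<bar> * B) ^ n" for n
      using int_norm_f_le[of n] by (simp add: integral_nonneg_AE divide_inverse mult.commute)
  qed
  moreover have "AE x in M. summable (\<lambda>k. norm (f k x))"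
    unfolding norm_f using summable_exp[of "\<bar>t * x\<bar>" for x] by (simp add: divide_inverse mult.commute)
  ultimately have "(\<integral>x. (\<Sum>k. f k x) \<partial>M) = (\<Sum>k. integral\<^sup>L M (f k))"
    by (intro integral_suminf int_f)
  also have "\<dots> = (\<Sum>k. (\<i> * complex_of_real t) ^ k / fact k * complex_of_real (integral\<^sup>L M (\<lambda>x. x ^ k)))"
    unfolding f_def by (simp only: integral_mult_right_zero integral_complex_of_real)
  finally show ?thesis
    unfolding char_def iexp_eq_suminf f_def .
qed

lemma real_distribution_eq_of_moments_eq:
  fixes M N :: "real measure"
  assumes M: "real_distribution M" and N: "real_distribution N" and "B > 0"
    and int_M: "\<And>n. integrable M (\<lambda>x. x ^ n)" and int_N: "\<And>n. integrable N (\<lambda>x. x ^ n)"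
    and eq: "\<And>n. integral\<^sup>L M (\<lambda>x. x ^ n) = integral\<^sup>L N (\<lambda>x. x ^ n)"
    and growth: "\<And>n. integral\<^sup>L M (\<lambda>x. x ^ (2 * n)) \<le> B ^ (2 * n)"
  shows "M = N"
proof -
  have "AE x in M. \<bar>x\<bar> \<le> B"
    by (rule AE_abs_le_of_even_moments_le[OF M \<open>B > 0\<close> int_M growth])
  moreover have "AE x in N. \<bar>x\<bar> \<le> B"
    by (rule AE_abs_le_of_even_moments_le[OF N \<open>B > 0\<close> int_N]) (use growth eq in metis)
  ultimately have "char M = char N"
    using char_eq_moment_series[OF M _ int_M] char_eq_moment_series[OF N _ int_N] eq
    by (auto simp: fun_eq_iff)
  then show ?thesis by (rule Levy_uniqueness[OF M N])
qed

lemma power_self_div_fact_le_exp_power: "real m ^ m / fact m \<le> exp 1 ^ m"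
proof -
  have "summable (\<lambda>k. real m ^ k / fact k)"
    using summable_exp[of "real m"] by (simp add: divide_inverse mult.commute)
  then have "(\<Sum>k\<in>{m}. real m ^ k / fact k) \<le> (\<Sum>k. real m ^ k / fact k)"
    by (rule sum_le_suminf) auto
  also have "(\<Sum>k. real m ^ k / fact k) = exp (real m)"
    using exp_converges[of "real m"] by (simp add: sums_iff divide_inverse mult.commute)
  finally show ?thesis by (simp add: exp_of_nat_mult[symmetric])
qed

section \<open>The function \<open>e\<^sup>z / z\<close>\<close>

definition exp_div :: "complex \<Rightarrow> complex" where
  "exp_div z = exp z / z"

lemma exp_div_power: "exp_div z ^ n = exp (of_nat n * z) / z ^ n"
  by (simp add: exp_div_def power_divide exp_of_nat_mult)

lemma exp_div_of_real: "exp_div (complex_of_real r) = complex_of_real (exp r / r)"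
  by (simp add: exp_div_def exp_of_real)

lemma norm_exp_div_power_polar:
  "r > 0 \<Longrightarrow> norm (exp_div (complex_of_real r * cis t) ^ n) = exp (real n * r * cos t) / r ^ n"
  by (simp add: exp_div_power norm_divide norm_mult norm_power)

lemma abs_Re_exp_div_power_polar_le:
  "r > 0 \<Longrightarrow> \<bar>Re (exp_div (complex_of_real r * cis t) ^ n)\<bar> \<le> exp (real n * r * cos t) / r ^ n"
  using abs_Re_le_cmod norm_exp_div_power_polar by metis

lemma continuous_on_exp_div_power_polar:
  "r \<noteq> 0 \<Longrightarrow> continuous_on S (\<lambda>t. exp_div (complex_of_real r * cis t) ^ n)"
  unfolding exp_div_def by (auto intro!: continuous_intros)

lemma has_field_derivative_exp_div_power [derivative_intros]:
  assumes "(g has_field_derivative g') (at x within S)" and "g x \<noteq> 0"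
  shows "((\<lambda>x. exp_div (g x) ^ n) has_field_derivative
           (of_nat n * exp_div (g x) ^ n * (g x - 1) / g x * g')) (at x within S)"
proof -
  have "((\<lambda>z. exp_div z ^ n) has_field_derivative of_nat n * exp_div (g x) ^ n * (g x - 1) / g x) (at (g x))"
  proof (cases n)
    case (Suc m)
    define y where "y = g x"
    have "y \<noteq> 0" using assms(2) by (simp add: y_def)
    have "((\<lambda>z. exp (of_nat n * z) / z ^ n) has_field_derivative
       (of_nat n * exp (of_nat n * y) * y ^ n - exp (of_nat n * y) * (of_nat n * y ^ (n - 1))) / (y ^ n * y ^ n)) (at y)"
      using \<open>y \<noteq> 0\<close> by (auto intro!: derivative_eq_intros)
    moreover have "(of_nat n * exp (of_nat n * y) * y ^ n - exp (of_nat n * y) * (of_nat n * y ^ (n - 1))) / (y ^ n * y ^ n)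
       = of_nat n * exp_div y ^ n * (y - 1) / y"
      unfolding exp_div_power using \<open>y \<noteq> 0\<close> by (simp add: Suc field_simps)
    ultimately show ?thesis unfolding y_def exp_div_power by simp
  qed simp
  from DERIV_chain2[OF this assms(1)] show ?thesis by simp
qed

text \<open>The Laurent coefficients of \<open>(e\<^sup>z / z)\<^sup>n\<close>, read off on the circle of radius \<open>r\<close>.\<close>

lemma Re_exp_div_power_polar_sums:
  assumes "r > 0"
  shows "(\<lambda>k. (real n * r) ^ k / fact k / r ^ n * cos ((real k - real n) * t))
           sums Re (exp_div (complex_of_real r * cis t) ^ n)"
proof -
  let ?w = "complex_of_real (real n * r) * cis t" and ?z = "complex_of_real r * cis t"
  have "(\<lambda>k. Re (?w ^ k /\<^sub>R fact k * inverse (?z ^ n))) sums Re (exp ?w * inverse (?z ^ n))"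
    by (intro sums_Re sums_mult2 exp_converges)
  moreover have term_eq: "Re (?w ^ k /\<^sub>R fact k * inverse (?z ^ n))
      = (real n * r) ^ k / fact k / r ^ n * cos ((real k - real n) * t)" for k
  proof -
    have "?w ^ k /\<^sub>R fact k * inverse (?z ^ n)
       = complex_of_real ((real n * r) ^ k / fact k / r ^ n) * (cis (real k * t) * cis (- (real n * t)))"
      using Complex.DeMoivre[of t k] Complex.DeMoivre[of t n]
      by (simp add: power_mult_distrib scaleR_conv_of_real field_simps cis_inverse[symmetric])
    also have "\<dots> = complex_of_real ((real n * r) ^ k / fact k / r ^ n) * cis ((real k - real n) * t)"
      by (simp add: cis_mult left_diff_distrib)
    finally have "?w ^ k /\<^sub>R fact k * inverse (?z ^ n)
      = complex_of_real ((real n * r) ^ k / fact k / r ^ n) * cis ((real k - real n) * t)" .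
    then show ?thesis by (metis Re_rcis rcis_def)
  qed
  moreover have sum_eq: "exp ?w * inverse (?z ^ n) = exp_div ?z ^ n"
    by (simp add: exp_div_power divide_inverse mult.assoc)
  ultimately show ?thesis by (simp only: term_eq sum_eq)
qed

lemma has_integral_cos_int_multiple:
  fixes k n :: nat
  shows "((\<lambda>t. cos ((real k - real n) * t)) has_integral (if k = n then pi else 0)) {0..pi}"
proof (cases "k = n")
  case False
  define m where "m = real k - real n"
  have "m \<noteq> 0" using False by (simp add: m_def)
  then have "((\<lambda>t. cos (m * t)) has_integral (sin (m * pi) / m - sin (m * 0) / m)) {0..pi}"
    by (intro fundamental_theorem_of_calculus)
       (auto intro!: derivative_eq_intros simp: has_real_derivative_iff_has_vector_derivative[symmetric])
  moreover have "sin (m * pi) = 0"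
    using sin_npi_int[of "int k - int n"] by (simp add: m_def mult.commute)
  ultimately show ?thesis using False by (simp add: m_def)
qed (use has_integral_const_real[of "1::real" 0 pi] in simp)

lemma has_integral_cos_series:
  fixes a :: "nat \<Rightarrow> real"
  assumes "summable a" and "\<And>k. 0 \<le> a k"
  shows "((\<lambda>t. \<Sum>k. a k * cos ((real k - real n) * t)) has_integral pi * a n) {0..pi}"
proof -
  define f where "f k t = a k * cos ((real k - real n) * t)" for k t
  have lim: "uniform_limit (cbox 0 pi) (\<lambda>N t. \<Sum>k<N. f k t) (\<lambda>t. \<Sum>k. f k t) sequentially"
  proof (rule Weierstrass_m_test[OF _ \<open>summable a\<close>])
    show "norm (f k t) \<le> a k" for k t
      unfolding f_def using assms(2)[of k] by (simp add: abs_mult mult_left_le)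
  qed
  have cont: "continuous_on (cbox 0 pi) (\<lambda>t. \<Sum>k<N. f k t)" for N
    unfolding f_def by (intro continuous_intros)
  obtain I J where I: "\<And>N. ((\<lambda>t. \<Sum>k<N. f k t) has_integral I N) {0..pi}"
    and J: "((\<lambda>t. \<Sum>k. f k t) has_integral J) {0..pi}" and "I \<longlonglongrightarrow> J"
    using uniform_limit_integral_cbox[OF lim cont] by auto
  have "((\<lambda>t. \<Sum>k<N. f k t) has_integral (\<Sum>k<N. a k * (if k = n then pi else 0))) {0..pi}" for N
    unfolding f_def by (intro has_integral_sum has_integral_mult_right has_integral_cos_int_multiple) auto
  then have "I N = (\<Sum>k<N. a k * (if k = n then pi else 0))" for N
    using I[of N] by (simp add: has_integral_unique)
  moreover have "(\<Sum>k<N. a k * (if k = n then pi else 0)) = pi * a n" if "N > n" for N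
    using that by (simp add: if_distrib sum.If_cases)
  ultimately have "eventually (\<lambda>N. I N = pi * a n) sequentially"
    by (auto simp: eventually_at_top_linorder intro!: exI[of _ "Suc n"])
  then have "I \<longlonglongrightarrow> pi * a n" by (rule tendsto_eventually)
  with \<open>I \<longlonglongrightarrow> J\<close> have "J = pi * a n" using LIMSEQ_unique by blast
  with J show ?thesis unfolding f_def by simp
qed

lemma has_integral_Re_exp_div_power_half_circle:
  assumes "r > 0"
  shows "((\<lambda>t. Re (exp_div (complex_of_real r * cis t) ^ n)) has_integral pi * (real n ^ n / fact n)) {0..pi}"
proof -
  define a where "a k = (real n * r) ^ k / fact k / r ^ n" for k
  have "summable a"
    unfolding a_def using summable_exp[of "real n * r"]
    by (intro summable_divide) (simp add: divide_inverse mult.commute)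
  then have "((\<lambda>t. \<Sum>k. a k * cos ((real k - real n) * t)) has_integral pi * a n) {0..pi}"
    by (rule has_integral_cos_series) (use assms in \<open>simp add: a_def\<close>)
  moreover have "(\<Sum>k. a k * cos ((real k - real n) * t)) = Re (exp_div (complex_of_real r * cis t) ^ n)" for t
    using Re_exp_div_power_polar_sums[OF assms, of n t] unfolding a_def by (simp add: sums_iff)
  moreover have "a n = real n ^ n / fact n"
    unfolding a_def using assms by (simp add: power_mult_distrib)
  ultimately show ?thesis by simp
qed

section \<open>The arc integral\<close>

definition abscissa :: "real \<Rightarrow> real" where
  "abscissa v = sin v / v * exp (v * cot v)"

text \<open>The circle of radius \<open>v / sin v\<close>, traversed from angle \<open>0\<close> (\<open>s = 0\<close>) to angle \<open>v\<close> (\<open>s = 1\<close>);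
  its end point \<open>v cot v + i v\<close> is where \<open>e\<^sup>z / z\<close> equals \<open>abscissa v\<close>.\<close>

definition arc_point :: "real \<Rightarrow> real \<Rightarrow> complex" where
  "arc_point v s = complex_of_real (v / sin v) * cis (v * s)"

lemma arc_point_nonzero: "sin v \<noteq> 0 \<Longrightarrow> v \<noteq> 0 \<Longrightarrow> arc_point v s \<noteq> 0"
  by (simp add: arc_point_def)

lemma arc_point_0: "arc_point v 0 = complex_of_real (v / sin v)"
  by (simp add: arc_point_def)

lemma exp_div_arc_1:
  assumes "sin v \<noteq> 0" and "v \<noteq> 0"
  shows "exp_div (arc_point v 1) = complex_of_real (abscissa v)"
proof -
  have "arc_point v 1 = complex_of_real (v * cot v) + \<i> * complex_of_real v"
    using assms by (simp add: arc_point_def cot_def complex_eq_iff)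
  then have "exp (arc_point v 1) = complex_of_real (exp (v * cot v)) * cis v"
    by (simp only: exp_add exp_of_real cis_conv_exp)
  moreover have "arc_point v 1 = complex_of_real (v / sin v) * cis v"
    by (simp add: arc_point_def)
  ultimately have "exp_div (arc_point v 1) = complex_of_real (exp (v * cot v)) / complex_of_real (v / sin v)"
    unfolding exp_div_def by simp
  then show ?thesis
    by (simp add: abscissa_def field_simps)
qed

definition arc_integral :: "nat \<Rightarrow> real \<Rightarrow> real" where
  "arc_integral n v = Re (integral {0..1} (\<lambda>s. complex_of_real v * exp_div (arc_point v s) ^ n))"

definition arc_integrand_dv :: "nat \<Rightarrow> real \<Rightarrow> real \<Rightarrow> complex" where
  "arc_integrand_dv n v s = exp_div (arc_point v s) ^ n *
     (1 + complex_of_real v * of_nat n * (arc_point v s - 1) * (complex_of_real (1 / v - cot v) + \<i> * complex_of_real s))"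

text \<open>By the Cauchy--Riemann equations, the \<open>v\<close>-derivative of the integrand of \<open>arc_integral\<close>
  is an \<open>s\<close>-derivative.\<close>

definition arc_integrand_dv_primitive :: "nat \<Rightarrow> real \<Rightarrow> real \<Rightarrow> complex" where
  "arc_integrand_dv_primitive n v s =
     (complex_of_real s - \<i> * complex_of_real (1 / v - cot v)) * exp_div (arc_point v s) ^ n"

lemma has_vector_derivative_arc_integrand:
  assumes "sin v \<noteq> 0" and "v \<noteq> 0"
  shows "((\<lambda>v. complex_of_real v * exp_div (arc_point v s) ^ n) has_vector_derivative arc_integrand_dv n v s)
           (at v within U)"
proof -
  define g where "g w = w / sin w * exp (\<i> * (w * of_real s))" for w :: complex
  have g_arc: "g (complex_of_real x) = arc_point x s" for x
    by (simp add: g_def arc_point_def sin_of_real cis_conv_exp)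
  have "sin (complex_of_real v) \<noteq> 0" "complex_of_real v \<noteq> 0"
    using assms by (simp_all add: sin_of_real)
  then have "(g has_field_derivative g (of_real v) *
      (1 / of_real v - cos (of_real v) / sin (of_real v) + \<i> * of_real s)) (at (of_real v))"
    unfolding g_def by (auto intro!: derivative_eq_intros simp: field_simps)
  then have "(g has_field_derivative arc_point v s *
      (1 / of_real v - cos (of_real v) / sin (of_real v) + \<i> * of_real s)) (at (of_real v))"
    by (simp only: g_arc)
  from DERIV_mult[OF DERIV_ident has_field_derivative_exp_div_power[OF this, of n]]
  have "((\<lambda>w. w * exp_div (g w) ^ n) has_field_derivative
     (1 * exp_div (arc_point v s) ^ n + (of_nat n * exp_div (arc_point v s) ^ n * (arc_point v s - 1) / arc_point v s *
        (arc_point v s * (1 / of_real v - cos (of_real v) / sin (of_real v) + \<i> * of_real s))) * of_real v))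
     (at (of_real v))"
    using arc_point_nonzero[OF assms] by (simp add: g_arc mult.commute)
  also have "1 * exp_div (arc_point v s) ^ n + (of_nat n * exp_div (arc_point v s) ^ n * (arc_point v s - 1) / arc_point v s *
        (arc_point v s * (1 / of_real v - cos (of_real v) / sin (of_real v) + \<i> * of_real s))) * of_real v
      = arc_integrand_dv n v s"
    using arc_point_nonzero[OF assms] assms
    by (simp add: arc_integrand_dv_def cot_def sin_of_real cos_of_real field_simps)
  finally show ?thesis
    using has_vector_derivative_real_field by (fastforce simp: g_arc)
qed

lemma has_vector_derivative_arc_integrand_dv_primitive:
  assumes "sin v \<noteq> 0" and "v \<noteq> 0"
  shows "(arc_integrand_dv_primitive n v has_vector_derivative arc_integrand_dv n v s) (at s within S)"
proof -
  define g where "g w = complex_of_real (v / sin v) * exp (\<i> * (of_real v * w))" for w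
  define c where "c = \<i> * complex_of_real (1 / v - cot v)"
  have g_arc: "g (complex_of_real x) = arc_point v x" for x
    by (simp add: g_def arc_point_def cis_conv_exp)
  have "(g has_field_derivative arc_point v s * (\<i> * of_real v)) (at (of_real s))"
    unfolding g_arc[symmetric] g_def using assms by (auto intro!: derivative_eq_intros)
  from DERIV_mult[OF DERIV_diff[OF DERIV_ident DERIV_const[of c]]
      has_field_derivative_exp_div_power[OF this, of n]]
  have "((\<lambda>w. (w - c) * exp_div (g w) ^ n) has_field_derivative
      (1 - 0) * exp_div (arc_point v s) ^ n + of_nat n * exp_div (arc_point v s) ^ n * (arc_point v s - 1) / arc_point v s *
        (arc_point v s * (\<i> * of_real v)) * (of_real s - c)) (at (of_real s))"
    using arc_point_nonzero[OF assms] by (simp add: g_arc)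
  also have "(1 - 0) * exp_div (arc_point v s) ^ n + of_nat n * exp_div (arc_point v s) ^ n * (arc_point v s - 1) / arc_point v s *
        (arc_point v s * (\<i> * of_real v)) * (of_real s - c)
      = arc_integrand_dv n v s"
    using arc_point_nonzero[OF assms] by (simp add: arc_integrand_dv_def c_def field_simps)
  finally show ?thesis
    using has_vector_derivative_real_field
    by (fastforce simp: g_arc c_def arc_integrand_dv_primitive_def[abs_def])
qed

lemma Re_arc_integrand_dv_primitive_diff:
  assumes "sin v \<noteq> 0" and "v \<noteq> 0"
  shows "Re (arc_integrand_dv_primitive n v 1 - arc_integrand_dv_primitive n v 0) = abscissa v ^ n"
  using exp_div_arc_1[OF assms] exp_div_of_real[of "v / sin v"]
  by (simp add: arc_integrand_dv_primitive_def arc_point_0)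

lemma continuous_on_arc_integrand_dv:
  "continuous_on ({0<..<pi} \<times> {0..1}) (\<lambda>(v, s). arc_integrand_dv n v s)"
proof -
  have "continuous_on ({0<..<pi} \<times> {0..1}) (\<lambda>p. arc_integrand_dv n (fst p) (snd p))"
    unfolding arc_integrand_dv_def exp_div_def arc_point_def cot_def
    by (auto intro!: continuous_intros; metis sin_gt_zero less_irrefl)
  then show ?thesis by (simp add: case_prod_beta')
qed

lemma continuous_on_arc_integrand:
  "0 < v \<Longrightarrow> v < pi \<Longrightarrow> continuous_on S (\<lambda>s. complex_of_real v * exp_div (arc_point v s) ^ n)"
  unfolding exp_div_def arc_point_def
  by (auto intro!: continuous_intros; metis sin_gt_zero less_irrefl)

lemma has_real_derivative_arc_integral:
  assumes "0 < v" "v < pi"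
  shows "(arc_integral n has_real_derivative abscissa v ^ n) (at v)"
proof -
  have v: "sin v \<noteq> 0" "v \<noteq> 0" using assms sin_gt_zero[of v] by auto
  have "((\<lambda>x. integral (cbox 0 1) (\<lambda>s. complex_of_real x * exp_div (arc_point x s) ^ n)) has_vector_derivative
          integral (cbox 0 1) (arc_integrand_dv n v)) (at v within {0<..<pi})"
  proof (rule leibniz_rule_vector_derivative)
    fix x t assume "x \<in> {0<..<pi}"
    then have "sin x \<noteq> 0" "x \<noteq> 0" using sin_gt_zero[of x] by auto
    then show "((\<lambda>x. complex_of_real x * exp_div (arc_point x t) ^ n) has_vector_derivative arc_integrand_dv n x t)
        (at x within {0<..<pi})"
      by (rule has_vector_derivative_arc_integrand)
  next
    fix x assume "x \<in> {0<..<pi::real}"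
    then show "(\<lambda>s. complex_of_real x * exp_div (arc_point x s) ^ n) integrable_on cbox 0 1"
      by (intro integrable_continuous continuous_on_arc_integrand) auto
  qed (use assms continuous_on_arc_integrand_dv in auto)
  moreover have "integral {0..1} (arc_integrand_dv n v)
      = arc_integrand_dv_primitive n v 1 - arc_integrand_dv_primitive n v 0"
    by (intro integral_unique fundamental_theorem_of_calculus)
       (auto intro!: has_vector_derivative_arc_integrand_dv_primitive v)
  ultimately have "((\<lambda>x. integral {0..1} (\<lambda>s. complex_of_real x * exp_div (arc_point x s) ^ n)) has_vector_derivative
      arc_integrand_dv_primitive n v 1 - arc_integrand_dv_primitive n v 0) (at v)"
    using assms by (simp add: at_within_open[of v "{0<..<pi}"])
  from has_field_derivative_Re[OF this] show ?thesis
    unfolding Re_arc_integrand_dv_primitive_diff[OF v] arc_integral_def[abs_def] .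
qed

lemma has_integral_abscissa_power:
  assumes "0 < a" "a \<le> b" "b < pi"
  shows "((\<lambda>v. abscissa v ^ n) has_integral arc_integral n b - arc_integral n a) {a..b}"
proof (rule fundamental_theorem_of_calculus)
  fix x assume "x \<in> {a..b}"
  then have "0 < x" "x < pi" using assms by auto
  then show "(arc_integral n has_vector_derivative abscissa x ^ n) (at x within {a..b})"
    by (auto simp: has_real_derivative_iff_has_vector_derivative[symmetric]
        intro: has_field_derivative_at_within has_real_derivative_arc_integral)
qed (use assms in auto)

lemma has_integral_arc_integral:
  assumes "0 < v" "v < pi"
  shows "((\<lambda>t. Re (exp_div (complex_of_real (v / sin v) * cis t) ^ n)) has_integral arc_integral n v) {0..v}"
proof -
  define g where "g t = exp_div (complex_of_real (v / sin v) * cis t) ^ n" for t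
  have "sin v > 0" using assms sin_gt_zero by auto
  with assms have "g integrable_on {0..v}"
    unfolding g_def by (intro integrable_continuous_interval continuous_on_exp_div_power_polar) simp
  then obtain G where G: "(g has_integral G) {0..v}" by blast
  from has_integral_stretch_real[OF G, of v] assms
  have "((\<lambda>x. g (v * x)) has_integral (1 / v) *\<^sub>R G) {0..1}"
    by (simp add: image_divide_atLeastAtMost)
  from has_integral_mult_left[OF this, of "complex_of_real v"] assms
  have "((\<lambda>s. complex_of_real v * exp_div (arc_point v s) ^ n) has_integral G) {0..1}"
    by (simp add: g_def arc_point_def scaleR_conv_of_real mult.commute)
  then have "arc_integral n v = Re G"
    unfolding arc_integral_def by (simp only: integral_unique)
  with has_integral_Re[OF G] show ?thesis unfolding g_def by simp
qed

lemma one_le_div_sin: "0 < v \<Longrightarrow> v < pi \<Longrightarrow> 1 \<le> v / sin v"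
  using sin_x_le_x[of v] sin_gt_zero[of v] by simp

lemma tendsto_arc_integral_at_left_pi:
  "(arc_integral n \<longlongrightarrow> pi * (real n ^ n / fact n)) (at_left pi)"
proof -
  define c where "c = pi * (real n ^ n / fact n)"
  have "((\<lambda>v. arc_integral n v - c) \<longlongrightarrow> 0) (at_left pi)"
  proof (rule Lim_null_comparison)
    show "((\<lambda>v. pi - v) \<longlongrightarrow> 0) (at_left pi)"
      by (auto intro!: tendsto_eq_intros)
    have "eventually (\<lambda>v. v \<in> {pi/2<..<pi}) (at_left pi)"
      by (rule eventually_at_left_real) simp
    then show "eventually (\<lambda>v. norm (arc_integral n v - c) \<le> pi - v) (at_left pi)"
    proof eventually_elim
      case (elim v)
      then have v: "0 < v" "v < pi" "pi/2 < v" by auto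
      define r where "r = v / sin v"
      have "1 \<le> r" unfolding r_def using one_le_div_sin v by auto
      define g where "g t = Re (exp_div (complex_of_real r * cis t) ^ n)" for t
      have "continuous_on {v..pi} g"
        unfolding g_def using \<open>1 \<le> r\<close> by (intro continuous_on_Re continuous_on_exp_div_power_polar) simp
      then obtain J where J: "(g has_integral J) {v..pi}"
        using integrable_continuous_interval by blast
      have "(g has_integral arc_integral n v) {0..v}"
        unfolding g_def r_def by (rule has_integral_arc_integral[OF v(1,2)])
      then have "(g has_integral arc_integral n v + J) {0..pi}"
        using J v by (intro has_integral_combine[of 0 v pi]) auto
      moreover have "(g has_integral c) {0..pi}"
        unfolding g_def c_def by (rule has_integral_Re_exp_div_power_half_circle) (use \<open>1 \<le> r\<close> in simp)
      ultimately have "arc_integral n v + J = c"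
        by (rule has_integral_unique)
      then have "J = c - arc_integral n v" by simp
      moreover have "norm J \<le> 1 * Henstock_Kurzweil_Integration.content (cbox v pi)"
      proof (rule has_integral_bound)
        fix t assume "t \<in> cbox v pi"
        then have "cos t \<le> 0" using v cos_ge_zero[of "pi - t"] by auto
        then have "exp (real n * r * cos t) \<le> 1"
          using \<open>1 \<le> r\<close> by (simp add: mult_nonneg_nonpos)
        also have "1 \<le> r ^ n" using \<open>1 \<le> r\<close> by (simp add: one_le_power)
        finally have "exp (real n * r * cos t) / r ^ n \<le> 1" using \<open>1 \<le> r\<close> by simp
        with abs_Re_exp_div_power_polar_le[of r t n] \<open>1 \<le> r\<close> show "norm (g t) \<le> 1"
          unfolding g_def real_norm_def by linarith
      qed (use J in simp_all)
      ultimately show ?case using v by (simp add: abs_minus_commute)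
    qed
  qed
  then show ?thesis unfolding c_def by (simp add: LIM_zero_iff)
qed

lemma tendsto_arc_integral_at_right_0: "(arc_integral n \<longlongrightarrow> 0) (at_right 0)"
proof (rule Lim_null_comparison)
  show "((\<lambda>v. v * exp (2 * real n)) \<longlongrightarrow> 0) (at_right 0)"
    by (auto intro!: tendsto_eq_intros)
  have "((\<lambda>x. sin x / x::real) \<longlongrightarrow> 1) (at_right 0)"
    using sinc_at_0 by (rule filterlim_mono) (simp_all add: at_within_le_at)
  then have "eventually (\<lambda>x::real. sin x / x > 1/2) (at_right 0)"
    by (rule order_tendstoD) simp
  moreover have "eventually (\<lambda>v::real. v \<in> {0<..<pi}) (at_right 0)"
    by (rule eventually_at_right_real) simp
  ultimately show "eventually (\<lambda>v. norm (arc_integral n v) \<le> v * exp (2 * real n)) (at_right 0)"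
  proof eventually_elim
    case (elim v)
    then have v: "0 < v" "v < pi" by auto
    define r where "r = v / sin v"
    have "1 \<le> r" unfolding r_def using one_le_div_sin v by auto
    have "r \<le> 2" unfolding r_def using elim v sin_gt_zero[of v] by (simp add: field_simps)
    have "norm (arc_integral n v) \<le> exp (2 * real n) * Henstock_Kurzweil_Integration.content (cbox 0 v)"
    proof (rule has_integral_bound)
      show "((\<lambda>t. Re (exp_div (complex_of_real r * cis t) ^ n)) has_integral arc_integral n v) (cbox 0 v)"
        unfolding r_def using has_integral_arc_integral[OF v] by simp
      fix t
      have "norm (Re (exp_div (complex_of_real r * cis t) ^ n)) \<le> exp (real n * r * cos t) / r ^ n"
        using abs_Re_exp_div_power_polar_le[of r t n] \<open>1 \<le> r\<close> by simp
      also have "\<dots> \<le> exp (real n * r * cos t)"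
        using \<open>1 \<le> r\<close> by (simp add: divide_le_eq one_le_power)
      also have "\<dots> \<le> exp (2 * real n)"
      proof -
        have "real n * r * cos t \<le> real n * r" using \<open>1 \<le> r\<close> by (intro mult_left_le) auto
        also have "\<dots> \<le> real n * 2" using \<open>r \<le> 2\<close> by (simp add: mult_left_mono)
        finally show ?thesis by simp
      qed
      finally show "norm (Re (exp_div (complex_of_real r * cis t) ^ n)) \<le> exp (2 * real n)" .
    qed simp
    then show ?case using v by (simp add: mult.commute)
  qed
qed

section \<open>The parametrization of the density\<close>

lemma mult_cos_less_sin:
  assumes "0 < v" "v < pi"
  shows "v * cos v < sin v"
proof -
  have "(\<lambda>x. sin x - x * cos x) 0 < (\<lambda>x. sin x - x * cos x) v"
  proof (rule DERIV_pos_imp_increasing_open[OF \<open>0 < v\<close>])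
    fix x assume x: "0 < x" "x < v"
    have "((\<lambda>x. sin x - x * cos x) has_real_derivative x * sin x) (at x)"
      by (auto intro!: derivative_eq_intros)
    moreover have "x * sin x > 0" using x assms sin_gt_zero[of x] by simp
    ultimately show "\<exists>y. ((\<lambda>x. sin x - x * cos x) has_real_derivative y) (at x) \<and> 0 < y" by blast
  qed (auto intro!: continuous_intros)
  then show ?thesis by simp
qed

lemma mult_cot_less_one: "0 < v \<Longrightarrow> v < pi \<Longrightarrow> v * cot v < 1"
  using mult_cos_less_sin[of v] sin_gt_zero[of v] by (simp add: cot_def field_simps)

lemma abscissa_pos: "0 < v \<Longrightarrow> v < pi \<Longrightarrow> 0 < abscissa v"
  unfolding abscissa_def using sin_gt_zero[of v] by simp

lemma abscissa_less_exp_1: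
  assumes "0 < v" "v < pi"
  shows "abscissa v < exp 1"
proof -
  have "abscissa v \<le> 1 * exp (v * cot v)"
    unfolding abscissa_def using sin_x_le_x[of v] assms by (intro mult_right_mono) auto
  also have "\<dots> < exp 1" using mult_cot_less_one[OF assms] by simp
  finally show ?thesis .
qed

definition abscissa_deriv :: "real \<Rightarrow> real" where
  "abscissa_deriv v = - abscissa v * ((1 - v * cot v)\<^sup>2 + v\<^sup>2) / v"

lemma has_real_derivative_abscissa:
  assumes "0 < v" "v < pi"
  shows "(abscissa has_real_derivative abscissa_deriv v) (at v)"
proof -
  have "sin v > 0" using sin_gt_zero assms by auto
  have eq: "abscissa = (\<lambda>v. sin v / v * exp (v * cos v / sin v))"
    by (simp add: abscissa_def[abs_def] cot_def)
  have "cos v * cos v = 1 - sin v * sin v"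
    using sin_cos_squared_add[of v] by (simp add: power2_eq_square)
  with \<open>sin v > 0\<close> assms show ?thesis
    unfolding eq
    by (auto intro!: derivative_eq_intros)
       (simp add: abscissa_deriv_def abscissa_def cot_def field_simps power2_eq_square)
qed

lemma abscissa_deriv_neg: "0 < v \<Longrightarrow> v < pi \<Longrightarrow> abscissa_deriv v < 0"
  unfolding abscissa_deriv_def using abscissa_pos[of v]
  by (simp add: add_nonneg_pos divide_pos_pos zero_less_mult_iff)

lemma continuous_on_abscissa: "0 < a \<Longrightarrow> b < pi \<Longrightarrow> continuous_on {a..b} abscissa"
  by (rule continuous_at_imp_continuous_on) (use has_real_derivative_abscissa[THEN DERIV_isCont] in auto)

lemma continuous_on_abscissa_deriv: "0 < a \<Longrightarrow> b < pi \<Longrightarrow> continuous_on {a..b} abscissa_deriv"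
  unfolding abscissa_deriv_def using continuous_on_abscissa[of a b]
  by (auto intro!: continuous_intros simp: cot_def;
      metis sin_gt_zero less_irrefl less_le_trans le_less_trans)

lemma abscissa_strict_decreasing:
  assumes "0 < a" "a < b" "b < pi"
  shows "abscissa b < abscissa a"
proof (rule DERIV_neg_imp_decreasing[OF \<open>a < b\<close>])
  fix x assume "a \<le> x" "x \<le> b"
  then show "\<exists>y. (abscissa has_real_derivative y) (at x) \<and> y < 0"
    using assms has_real_derivative_abscissa abscissa_deriv_neg by (meson less_le_trans le_less_trans)
qed

lemma inj_on_abscissa: "inj_on abscissa {0<..<pi}"
  by (rule inj_onI) (metis abscissa_strict_decreasing greaterThanLessThan_iff less_irrefl neqE)

lemma abscissa_image_interval:
  assumes "0 < a" "a \<le> b" "b < pi"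
  shows "abscissa ` {a..b} = {abscissa b..abscissa a}"
proof
  show "abscissa ` {a..b} \<subseteq> {abscissa b..abscissa a}"
    using abscissa_strict_decreasing[of a] abscissa_strict_decreasing[of _ b] assms
    by (force simp: le_less)
  show "{abscissa b..abscissa a} \<subseteq> abscissa ` {a..b}"
    using IVT2'[of abscissa b _ a] continuous_on_abscissa[of a b] assms by force
qed

definition ordinate :: "real \<Rightarrow> real" where
  "ordinate v = 1 / pi * (v\<^sup>2 * exp (- (v * cot v))) / (sin v * ((1 - v * cot v)\<^sup>2 + v\<^sup>2))"

lemma ordinate_pos: "0 < v \<Longrightarrow> v < pi \<Longrightarrow> 0 < ordinate v"
  unfolding ordinate_def using sin_gt_zero[of v]
  by (intro divide_pos_pos mult_pos_pos) (auto intro: add_nonneg_pos)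

lemma continuous_on_ordinate: "0 < a \<Longrightarrow> b < pi \<Longrightarrow> continuous_on {a..b} ordinate"
  unfolding ordinate_def cot_def
  by (auto intro!: continuous_intros; metis sin_gt_zero less_irrefl less_le_trans le_less_trans)

text \<open>That is, \<open>\<phi>(y) dy = dv / \<pi>\<close> under \<open>y = abscissa v\<close>.\<close>

lemma ordinate_mult_abscissa_deriv:
  assumes "0 < v" "v < pi"
  shows "ordinate v * (- abscissa_deriv v) = 1 / pi"
proof -
  define Q where "Q = (1 - v * cot v)\<^sup>2 + v\<^sup>2"
  have "sin v > 0" using sin_gt_zero assms by auto
  moreover have "Q > 0" unfolding Q_def using assms by (auto intro: add_nonneg_pos)
  moreover have "exp (- (v * cot v)) * exp (v * cot v) = 1" by (simp add: exp_minus)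
  ultimately show ?thesis
    using assms unfolding ordinate_def abscissa_deriv_def abscissa_def Q_def[symmetric]
    by (simp add: field_simps power2_eq_square)
qed

section \<open>The density and its moments\<close>

definition phi :: "real \<Rightarrow> real" where
  "phi y = (if y \<in> abscissa ` {0<..<pi} then ordinate (the_inv_into {0<..<pi} abscissa y) else 0)"

lemma the_inv_into_abscissa: "0 < v \<Longrightarrow> v < pi \<Longrightarrow> the_inv_into {0<..<pi} abscissa (abscissa v) = v"
  using the_inv_into_f_f[OF inj_on_abscissa] by auto

lemma phi_abscissa: "0 < v \<Longrightarrow> v < pi \<Longrightarrow> phi (abscissa v) = ordinate v"
  unfolding phi_def using the_inv_into_abscissa by auto

lemma phi_nonneg: "0 \<le> phi y"
  unfolding phi_def using ordinate_pos the_inv_into_abscissa by (auto simp: less_imp_le)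

lemma phi_eq_0: "y \<notin> {0<..<exp 1} \<Longrightarrow> phi y = 0"
  unfolding phi_def using abscissa_pos abscissa_less_exp_1 by force

lemma power_mult_phi_nonneg: "0 \<le> y ^ n * phi y"
  using phi_nonneg[of y] phi_eq_0[of y] by (cases "0 < y") auto

lemma continuous_on_phi_abscissa_image:
  assumes "0 < a" "b < pi"
  shows "continuous_on (abscissa ` {a..b}) phi"
proof -
  have "continuous_on (abscissa ` {a..b}) (the_inv_into {0<..<pi} abscissa)"
    using continuous_on_abscissa[OF assms] assms the_inv_into_abscissa
    by (intro continuous_on_inv) auto
  moreover have "the_inv_into {0<..<pi} abscissa ` abscissa ` {a..b} \<subseteq> {a..b}"
    using assms the_inv_into_abscissa by auto
  ultimately have "continuous_on (abscissa ` {a..b}) (\<lambda>y. ordinate (the_inv_into {0<..<pi} abscissa y))"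
    by (rule continuous_on_compose2[OF continuous_on_ordinate[OF assms]])
  then show ?thesis
    by (rule continuous_on_cong[THEN iffD1, rotated 2])
       (use assms in \<open>auto simp: phi_def\<close>)
qed

text \<open>The substitution \<open>y = abscissa v\<close>, written through \<open>x = - v\<close> because
  \<open>abscissa\<close> is decreasing.\<close>

lemma nn_integral_substitution_abscissa:
  assumes "0 < a" "a < b" "b < pi"
    and "set_borel_measurable borel {abscissa b..abscissa a} f"
  shows "(\<integral>\<^sup>+ y. ennreal (f y * indicator {abscissa b..abscissa a} y) \<partial>lborel) =
         (\<integral>\<^sup>+ x. ennreal (f (abscissa (- x)) * - abscissa_deriv (- x) * indicator {- b..- a} x) \<partial>lborel)"
proof -
  have "(\<integral>\<^sup>+ y. ennreal (f y * indicator {abscissa (- (- b))..abscissa (- (- a))} y) \<partial>lborel) =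
        (\<integral>\<^sup>+ x. ennreal (f (abscissa (- x)) * - abscissa_deriv (- x) * indicator {- b..- a} x) \<partial>lborel)"
  proof (rule nn_integral_substitution[where g = "\<lambda>x. abscissa (- x)"])
    fix x assume "x \<in> {- b..- a}"
    then have x: "0 < - x" "- x < pi" using assms by auto
    have "((\<lambda>x. abscissa (- x)) has_real_derivative abscissa_deriv (- x) * (- 1)) (at x)"
      by (rule DERIV_chain2[OF has_real_derivative_abscissa[OF x] DERIV_minus[OF DERIV_ident]])
    then show "((\<lambda>x. abscissa (- x)) has_real_derivative - abscissa_deriv (- x)) (at x)" by simp
    show "0 \<le> - abscissa_deriv (- x)" using abscissa_deriv_neg[OF x] by simp
  next
    have "continuous_on {-b..-a} (abscissa_deriv \<circ> uminus)"
      using assms by (intro continuous_on_compose continuous_intros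
          continuous_on_abscissa_deriv[THEN continuous_on_subset]) auto
    then show "continuous_on {- b..- a} (\<lambda>x. - abscissa_deriv (- x))"
      by (intro continuous_intros) (simp add: o_def)
  qed (use assms in auto)
  then show ?thesis by simp
qed

lemma nn_integral_power_phi_abscissa_image:
  assumes "0 < a" "a < b" "b < pi"
  shows "(\<integral>\<^sup>+ y. ennreal (y ^ n * phi y * indicator (abscissa ` {a..b}) y) \<partial>lborel)
           = ennreal ((arc_integral n b - arc_integral n a) / pi)"
proof -
  define f where "f y = y ^ n * phi y" for y
  have "continuous_on {abscissa b..abscissa a} phi"
    using continuous_on_phi_abscissa_image[of a b] abscissa_image_interval[of a b] assms by simp
  then have "f \<in> borel_measurable (restrict_space borel {abscissa b..abscissa a})"
    unfolding f_def by (intro borel_measurable_continuous_on_restrict continuous_intros)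
  then have "(\<integral>\<^sup>+ y. ennreal (f y * indicator {abscissa b..abscissa a} y) \<partial>lborel) =
        (\<integral>\<^sup>+ x. ennreal (f (abscissa (- x)) * - abscissa_deriv (- x) * indicator {- b..- a} x) \<partial>lborel)"
    using assms by (intro nn_integral_substitution_abscissa)
      (simp_all add: set_borel_measurable_def borel_measurable_restrict_space_iff)
  also have "\<dots> = (\<integral>\<^sup>+ x. ennreal (indicator {- b..- a} x * (abscissa (- x) ^ n / pi)) \<partial>lborel)"
  proof (intro nn_integral_cong)
    fix x :: real
    show "ennreal (f (abscissa (- x)) * - abscissa_deriv (- x) * indicator {- b..- a} x)
        = ennreal (indicator {- b..- a} x * (abscissa (- x) ^ n / pi))"
    proof (cases "x \<in> {- b..- a}")
      case True
      then have x: "0 < - x" "- x < pi" using assms by auto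
      then have "f (abscissa (- x)) * - abscissa_deriv (- x) = abscissa (- x) ^ n / pi"
        unfolding f_def phi_abscissa[OF x] using ordinate_mult_abscissa_deriv[OF x]
        by (metis mult.assoc times_divide_eq_right mult.right_neutral)
      then show ?thesis using True by simp
    qed simp
  qed
  also have "\<dots> = ennreal ((arc_integral n b - arc_integral n a) / pi)"
  proof (rule nn_integral_has_integral_lebesgue)
    show "0 \<le> abscissa (- x) ^ n / pi" if "x \<in> {- b..- a}" for x
      using abscissa_pos that assms by (auto intro!: divide_nonneg_pos zero_le_power less_imp_le)
    have "((\<lambda>v. abscissa v ^ n) has_integral arc_integral n b - arc_integral n a) {a..b}"
      using assms by (intro has_integral_abscissa_power) auto
    from has_integral_divide[OF has_integral_reflect_lemma_real[OF this], of pi]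
    show "((\<lambda>x. abscissa (- x) ^ n / pi) has_integral (arc_integral n b - arc_integral n a) / pi) {- b..- a}" .
  qed
  finally show ?thesis
    unfolding f_def abscissa_image_interval[OF assms(1) less_imp_le[OF assms(2)] assms(3)] by (simp add: mult.assoc)
qed

definition trim :: "nat \<Rightarrow> real" where
  "trim k = pi / (real k + 3)"

definition trimmed_range :: "nat \<Rightarrow> real set" where
  "trimmed_range k = abscissa ` {trim k..pi - trim k}"

lemma trim_pos: "0 < trim k"
  unfolding trim_def by simp

lemma trim_less: "trim k < pi - trim k"
proof -
  have "0 < pi + pi * real k" by (simp add: add_pos_nonneg)
  then have "2 * (pi / (real k + 3)) < pi" by (simp add: field_simps)
  then show ?thesis unfolding trim_def by simp
qed

lemma trim_Suc_le: "trim (Suc k) \<le> trim k"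
  unfolding trim_def by (simp add: frac_le)

lemma LIMSEQ_trim: "trim \<longlonglongrightarrow> 0"
proof -
  have "filterlim (\<lambda>k. real k + 3) at_top sequentially"
    by (rule filterlim_at_top_mono[OF filterlim_real_sequentially]) simp
  from tendsto_mult[OF tendsto_const tendsto_inverse_0_at_top[OF this], of pi]
  show ?thesis unfolding trim_def by (simp add: divide_inverse)
qed

lemma trimmed_range_eq: "trimmed_range k = {abscissa (pi - trim k)..abscissa (trim k)}"
  unfolding trimmed_range_def using trim_pos[of k] trim_less[of k]
  by (intro abscissa_image_interval) auto

lemma incseq_trimmed_range: "incseq trimmed_range"
  unfolding trimmed_range_def using trim_Suc_le
  by (intro incseq_SucI image_mono) (auto simp: algebra_simps)

lemma eventually_abscissa_in_trimmed_range:
  assumes "0 < v" "v < pi"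
  shows "eventually (\<lambda>k. abscissa v \<in> trimmed_range k) sequentially"
proof -
  have "eventually (\<lambda>k. trim k < v) sequentially"
    by (rule order_tendstoD(2)[OF LIMSEQ_trim \<open>0 < v\<close>])
  moreover have "eventually (\<lambda>k. trim k < pi - v) sequentially"
    by (rule order_tendstoD(2)[OF LIMSEQ_trim]) (use assms in simp)
  ultimately show ?thesis
    by eventually_elim (auto simp: trimmed_range_def)
qed

lemma tendsto_indicator_trimmed_range:
  assumes "y \<notin> abscissa ` {0<..<pi} \<Longrightarrow> f y = 0"
  shows "(\<lambda>k. indicator (trimmed_range k) y * f y) \<longlonglongrightarrow> (f y :: real)"
proof (cases "y \<in> abscissa ` {0<..<pi}")
  case True
  then obtain v where v: "0 < v" "v < pi" and "y = abscissa v" by auto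
  have "eventually (\<lambda>k. indicator (trimmed_range k) y * f y = f y) sequentially"
    using eventually_abscissa_in_trimmed_range[OF v] unfolding \<open>y = abscissa v\<close>
    by eventually_elim simp
  then show ?thesis by (simp add: tendsto_eventually)
qed (use assms in simp)

lemma borel_measurable_phi: "phi \<in> borel_measurable borel"
proof (rule borel_measurable_LIMSEQ_real)
  show "(\<lambda>k. indicator (trimmed_range k) y * phi y) \<longlonglongrightarrow> phi y" for y
    by (rule tendsto_indicator_trimmed_range) (simp add: phi_def)
next
  fix k
  have "continuous_on (trimmed_range k) phi"
    unfolding trimmed_range_def using trim_pos[of k] by (intro continuous_on_phi_abscissa_image) auto
  then have "(\<lambda>y. indicator (trimmed_range k) y *\<^sub>R phi y) \<in> borel_measurable borel"
    by (rule borel_measurable_continuous_on_indicator[rotated]) (simp add: trimmed_range_eq)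
  then show "(\<lambda>y. indicator (trimmed_range k) y * phi y) \<in> borel_measurable borel"
    by simp
qed

lemma nn_integral_power_phi:
  "(\<integral>\<^sup>+ y. ennreal (y ^ n * phi y) \<partial>lborel) = ennreal (real n ^ n / fact n)"
proof -
  define g where "g k y = ennreal (indicator (trimmed_range k) y * (y ^ n * phi y))" for k y
  have "incseq g"
    using incseq_trimmed_range power_mult_phi_nonneg
    by (intro incseq_SucI le_funI ennreal_leI mult_right_mono)
       (auto simp: g_def indicator_def incseq_Suc_iff)
  moreover have "g k \<in> borel_measurable lborel" for k
    unfolding g_def trimmed_range_eq using borel_measurable_phi by measurable
  moreover have "(\<lambda>k. g k y) \<longlonglongrightarrow> ennreal (y ^ n * phi y)" for y
    unfolding g_def by (intro tendsto_ennrealI tendsto_indicator_trimmed_range) (simp add: phi_def)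
  ultimately have "(\<lambda>k. integral\<^sup>N lborel (g k)) \<longlonglongrightarrow> (\<integral>\<^sup>+ y. ennreal (y ^ n * phi y) \<partial>lborel)"
    by (rule nn_integral_LIMSEQ)
  moreover have "integral\<^sup>N lborel (g k)
      = ennreal ((arc_integral n (pi - trim k) - arc_integral n (trim k)) / pi)" for k
    unfolding g_def trimmed_range_def using trim_pos[of k] trim_less[of k]
    by (subst nn_integral_power_phi_abscissa_image[symmetric]) (auto simp: mult.commute)
  moreover have "(\<lambda>k. (arc_integral n (pi - trim k) - arc_integral n (trim k)) / pi)
      \<longlonglongrightarrow> (pi * (real n ^ n / fact n) - 0) / pi"
  proof (intro tendsto_divide tendsto_diff tendsto_const)
    have "filterlim trim (at_right 0) sequentially"
      by (rule tendsto_imp_filterlim_at_right[OF LIMSEQ_trim]) (simp add: trim_pos)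
    then show "(\<lambda>k. arc_integral n (trim k)) \<longlonglongrightarrow> 0"
      by (rule filterlim_compose[OF tendsto_arc_integral_at_right_0])
    have "filterlim (\<lambda>k. pi - trim k) (at_left pi) sequentially"
      using tendsto_diff[OF tendsto_const LIMSEQ_trim, of pi] trim_pos
      by (intro tendsto_imp_filterlim_at_left) auto
    then show "(\<lambda>k. arc_integral n (pi - trim k)) \<longlonglongrightarrow> pi * (real n ^ n / fact n)"
      by (rule filterlim_compose[OF tendsto_arc_integral_at_left_pi])
  qed simp
  then have "(\<lambda>k. ennreal ((arc_integral n (pi - trim k) - arc_integral n (trim k)) / pi))
      \<longlonglongrightarrow> ennreal (real n ^ n / fact n)"
    by (intro tendsto_ennrealI) simp
  ultimately show ?thesis
    using LIMSEQ_unique by auto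
qed

lemma
  shows integrable_power_density_phi: "integrable (density lborel (\<lambda>x. ennreal (phi x))) (\<lambda>x. x ^ n)"
    and integral_power_density_phi:
      "integral\<^sup>L (density lborel (\<lambda>x. ennreal (phi x))) (\<lambda>x. x ^ n) = real n ^ n / fact n"
proof -
  have "(\<lambda>x. phi x * x ^ n) \<in> borel_measurable lborel"
    using borel_measurable_phi by measurable
  moreover have "0 \<le> phi x * x ^ n" for x
    using power_mult_phi_nonneg[of x n] by (simp add: mult.commute)
  ultimately have "integrable lborel (\<lambda>x. phi x * x ^ n) \<and> integral\<^sup>L lborel (\<lambda>x. phi x * x ^ n) = real n ^ n / fact n"
    using nn_integral_eq_integrable[of "\<lambda>x. phi x * x ^ n" lborel "real n ^ n / fact n"]
      nn_integral_power_phi[of n] by (simp add: mult.commute)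
  then show "integrable (density lborel (\<lambda>x. ennreal (phi x))) (\<lambda>x. x ^ n)"
    and "integral\<^sup>L (density lborel (\<lambda>x. ennreal (phi x))) (\<lambda>x. x ^ n) = real n ^ n / fact n"
    using borel_measurable_phi phi_nonneg
    by (subst integrable_density integral_density; auto)+
qed

lemma real_distribution_density_phi: "real_distribution (density lborel (\<lambda>x. ennreal (phi x)))"
proof (intro real_distribution.intro real_distribution_axioms.intro prob_spaceI)
  have "emeasure (density lborel (\<lambda>x. ennreal (phi x))) UNIV = (\<integral>\<^sup>+ x. ennreal (x ^ 0 * phi x) \<partial>lborel)"
    using borel_measurable_phi by (simp add: emeasure_density)
  then show "emeasure (density lborel (\<lambda>x. ennreal (phi x))) (space (density lborel (\<lambda>x. ennreal (phi x)))) = 1"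
    using nn_integral_power_phi[of 0] by simp
qed simp

theorem proposition15:
  fixes M :: "real measure"
  assumes "prob_space M"
    and "sets M = sets borel"
    and "\<And>n::nat. integrable M (\<lambda>x. x ^ n)"
    and "\<And>n::nat. integral\<^sup>L M (\<lambda>x. x ^ n) = real n ^ n / fact n"
  shows "\<exists>\<phi> :: real \<Rightarrow> real.
           \<phi> \<in> borel_measurable borel \<and>
           (\<forall>x. 0 \<le> \<phi> x) \<and>
           M = density lborel (\<lambda>x. ennreal (\<phi> x)) \<and>
           (\<forall>x. x \<notin> {0..exp 1} \<longrightarrow> \<phi> x = 0) \<and>
           (\<forall>v. 0 < v \<and> v < pi \<longrightarrow>
              \<phi> (sin v / v * exp (v * cot v)) =
                1 / pi * (v\<^sup>2 * exp (- (v * cot v))) /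
                  (sin v * ((1 - v * cot v)\<^sup>2 + v\<^sup>2)))"
proof (intro exI conjI allI impI)
  have "real_distribution M"
    using assms(1,2) by (intro real_distribution.intro real_distribution_axioms.intro)
  then show "M = density lborel (\<lambda>x. ennreal (phi x))"
  proof (rule real_distribution_eq_of_moments_eq[OF _ real_distribution_density_phi, where B = "exp 1"])
    show "integral\<^sup>L M (\<lambda>x. x ^ (2 * n)) \<le> exp 1 ^ (2 * n)" for n
      unfolding assms(4) by (rule power_self_div_fact_le_exp_power)
  qed (simp_all add: assms(3,4) integrable_power_density_phi integral_power_density_phi)
  show "phi (sin v / v * exp (v * cot v)) =
      1 / pi * (v\<^sup>2 * exp (- (v * cot v))) / (sin v * ((1 - v * cot v)\<^sup>2 + v\<^sup>2))"
    if "0 < v \<and> v < pi" for v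
    using phi_abscissa[of v] that unfolding abscissa_def ordinate_def by simp
qed (use borel_measurable_phi phi_nonneg phi_eq_0 in auto)

end
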